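(* Let $0<p=p(n)\le 2/n$ with $n^2p=\omega(1)$. Let $H$ be an $n$-vertex connected graph with maximum degree $\Delta$, $1\le \Delta\le n^2p/57600$. Let $G=G(n,p)$ on $V(H)$ and $R:=H\cup G$. Then whp $\mathrm{tw}(R)=\Omega(\mathrm{tw}(H)+n^2p/\Delta)$.
   Context: $G(n,p)$ is the binomial random graph; asymptotics are as $n\to\infty$; whp means with probability $1-o(1)$; $\Omega$ hides an absolute positive constant. $\mathrm{tw}$ denotes treewidth. *)

theory Defs
  imports "HOL-Probability.Probability"
begin

definition ugraph :: "'a set \<Rightarrow> 'a set set \<Rightarrow> bool" where
  "ugraph V E \<longleftrightarrow> finite V \<and> (\<forall>e\<in>E. \<exists>u v. e = {u, v} \<and> u \<noteq> v \<and> u \<in> V \<and> v \<in> V)"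

definition connected_graph :: "'a set \<Rightarrow> 'a set set \<Rightarrow> bool" where
  "connected_graph V E \<longleftrightarrow> V \<noteq> {} \<and>
     (\<forall>u\<in>V. \<forall>v\<in>V. (\<lambda>x y. {x, y} \<in> E)\<^sup>*\<^sup>* u v)"

definition is_tree :: "'a set \<Rightarrow> 'a set set \<Rightarrow> bool" where
  "is_tree I F \<longleftrightarrow> ugraph I F \<and> connected_graph I F \<and> card F = card I - 1"

definition degree :: "'a set set \<Rightarrow> 'a \<Rightarrow> nat" where
  "degree E v = card {e\<in>E. v \<in> e}"

definition max_degree :: "'a set \<Rightarrow> 'a set set \<Rightarrow> nat" where
  "max_degree V E = Max (degree E ` V)"

definition tree_decomp :: "'a set \<Rightarrow> 'a set set \<Rightarrow> nat set \<Rightarrow> nat set set \<Rightarrow> (nat \<Rightarrow> 'a set) \<Rightarrow> bool" where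
  "tree_decomp V E I F B \<longleftrightarrow> is_tree I F \<and>
     (\<forall>i\<in>I. B i \<subseteq> V) \<and>
     (\<forall>v\<in>V. \<exists>i\<in>I. v \<in> B i) \<and>
     (\<forall>e\<in>E. \<exists>i\<in>I. e \<subseteq> B i) \<and>
     (\<forall>v\<in>V. connected_graph {i\<in>I. v \<in> B i} {f\<in>F. \<forall>i\<in>f. v \<in> B i})"

definition treewidth :: "'a set \<Rightarrow> 'a set set \<Rightarrow> nat" where
  "treewidth V E = (LEAST k. \<exists>I F B. tree_decomp V E I F B \<and> (\<forall>i\<in>I. card (B i) \<le> k + 1))"

definition all_pairs :: "nat \<Rightarrow> nat set set" where
  "all_pairs n = {e. \<exists>u v. e = {u, v} \<and> u \<noteq> v \<and> u < n \<and> v < n}"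

definition Gnp :: "nat \<Rightarrow> real \<Rightarrow> nat set set pmf" where
  "Gnp n p = map_pmf (\<lambda>f. {e\<in>all_pairs n. f e}) (Pi_pmf (all_pairs n) False (\<lambda>_. bernoulli_pmf p))"

end

theory Submission
  imports Defs
begin

text \<open>Cut H, along a breadth-first spanning tree, into connected pieces of at most Delta L
  vertices, all but one with at least L vertices, where L is about 100 n / (n^2 p); there are
  at most n^2 p / 100 + 1 pieces. Given a tree decomposition of R = H \<union> G of width k, the
  connected pieces induce subtrees of the decomposition tree, and a centroid bag splits the
  pieces it misses into two groups of nearly equal size with no edge of R between them, while
  it meets at most k + 1 pieces. If k is small compared to n^2 p / Delta, both groups cover at
  least n / 5 vertices, so G avoids at least (n/5)^2 pairs: probability at most exp(-n^2 p / 25)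
  for each of the at most 4^(number of pieces) choices of groups. As tw R \<ge> tw H, the
  constant 1/8000 works.\<close>

section \<open>Paths and breadth-first trees\<close>

abbreviation adj :: "'a set set \<Rightarrow> 'a \<Rightarrow> 'a \<Rightarrow> bool" where
  "adj E x y \<equiv> {x, y} \<in> E"

abbreviation adj_within :: "'a set set \<Rightarrow> 'a set \<Rightarrow> 'a \<Rightarrow> 'a \<Rightarrow> bool" where
  "adj_within E S \<equiv> \<lambda>u v. adj E u v \<and> u \<in> S \<and> v \<in> S"

definition connected_on :: "'a set set \<Rightarrow> 'a set \<Rightarrow> bool" where
  "connected_on E S \<longleftrightarrow> (\<forall>a\<in>S. \<forall>b\<in>S. (adj_within E S)\<^sup>*\<^sup>* a b)"

lemma rtranclp_symmetric:
  assumes "\<And>a b. r a b \<Longrightarrow> r b a" "r\<^sup>*\<^sup>* x y"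
  shows "r\<^sup>*\<^sup>* y x"
  using symp_rtranclp[of r] assms unfolding symp_def by blast

lemma rtranclp_rtranclp_mono:
  assumes "\<And>a b. r a b \<Longrightarrow> s\<^sup>*\<^sup>* a b" "r\<^sup>*\<^sup>* u v"
  shows "s\<^sup>*\<^sup>* u v"
  using assms(2) by induction (auto intro: rtranclp_trans assms(1))

lemma connected_onI:
  assumes "\<forall>w\<in>D. (adj_within E D)\<^sup>*\<^sup>* w v"
  shows "connected_on E D"
  unfolding connected_on_def
proof (intro ballI)
  fix a b assume "a \<in> D" "b \<in> D"
  then have av: "(adj_within E D)\<^sup>*\<^sup>* a v" and bv: "(adj_within E D)\<^sup>*\<^sup>* b v"
    using assms by blast+
  have "(adj_within E D)\<^sup>*\<^sup>* v b"
    by (rule rtranclp_symmetric[OF _ bv]) (auto simp: insert_commute)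
  with av show "(adj_within E D)\<^sup>*\<^sup>* a b" by (rule rtranclp_trans)
qed

lemma ugraph_finite_edges: "ugraph V E \<Longrightarrow> finite E"
proof -
  assume u: "ugraph V E"
  then have "E \<subseteq> Pow V" "finite V" unfolding ugraph_def by auto
  then show "finite E" by (meson finite_Pow_iff rev_finite_subset)
qed

lemma ugraph_adjD: "ugraph V E \<Longrightarrow> adj E a b \<Longrightarrow> a \<in> V \<and> b \<in> V \<and> a \<noteq> b"
  unfolding ugraph_def by (force simp: doubleton_eq_iff)

definition graph_dist :: "'a set set \<Rightarrow> 'a \<Rightarrow> 'a \<Rightarrow> nat" where
  "graph_dist E r v = (LEAST k. (adj E ^^ k) v r)"

lemma graph_dist_path:
  assumes "(adj E)\<^sup>*\<^sup>* v r"
  shows "(adj E ^^ graph_dist E r v) v r"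
proof -
  obtain k where "(adj E ^^ k) v r" using rtranclp_imp_relpowp[OF assms] by blast
  then show ?thesis unfolding graph_dist_def by (rule LeastI)
qed

lemma graph_dist_le:
  assumes "(adj E ^^ k) v r"
  shows "graph_dist E r v \<le> k"
  using assms unfolding graph_dist_def by (rule Least_le)

lemma exists_neighbour_closer:
  assumes "(adj E)\<^sup>*\<^sup>* v r" "v \<noteq> r"
  shows "\<exists>u. adj E v u \<and> graph_dist E r u < graph_dist E r v"
proof -
  let ?k = "graph_dist E r v"
  have k: "(adj E ^^ ?k) v r" using graph_dist_path[OF assms(1)] .
  have "?k \<noteq> 0"
  proof
    assume "?k = 0" then show False using k assms(2) by simp
  qed
  then obtain j where j: "?k = Suc j" by (cases ?k) auto
  then obtain u where u: "adj E v u" "(adj E ^^ j) u r"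
  proof -
    have "(adj E ^^ Suc j) v r" using k j by simp
    then show ?thesis using that by (blast dest: relpowp_Suc_D2)
  qed
  have "graph_dist E r u \<le> j" using graph_dist_le[OF u(2)] .
  then show ?thesis using u(1) j by auto
qed

lemma exists_ranked_parent:
  assumes "\<forall>v\<in>V. (adj E)\<^sup>*\<^sup>* v r"
  shows "\<exists>par (rk :: 'a \<Rightarrow> nat). \<forall>v\<in>V-{r}. adj E v (par v) \<and> rk (par v) < rk v"
proof -
  have "\<forall>v\<in>V-{r}. \<exists>u. adj E v u \<and> graph_dist E r u < graph_dist E r v"
    using assms exists_neighbour_closer[of E _ r] by simp
  then obtain par where "\<forall>v\<in>V-{r}. adj E v (par v) \<and> graph_dist E r (par v) < graph_dist E r v"
    using bchoice[where Q = "\<lambda>v u. adj E v u \<and> graph_dist E r u < graph_dist E r v"] by blast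
  then show ?thesis by (intro exI[of _ par] exI[of _ "graph_dist E r"])
qed

lemma connected_card_le_Suc_card_edges:
  assumes fin: "finite E" and r: "r \<in> V" and conn: "\<forall>v\<in>V. (adj E)\<^sup>*\<^sup>* v r"
  shows "card V \<le> card E + 1"
proof -
  obtain par and rk :: "'a \<Rightarrow> nat" where par: "\<forall>v\<in>V-{r}. adj E v (par v) \<and> rk (par v) < rk v"
    using exists_ranked_parent[OF conn] by (elim exE) blast
  have inj: "inj_on (\<lambda>v. {v, par v}) (V - {r})"
  proof (rule inj_onI)
    fix v w assume v: "v \<in> V - {r}" and w: "w \<in> V - {r}" and eq: "{v, par v} = {w, par w}"
    show "v = w"
    proof (rule ccontr)
      assume "v \<noteq> w"
      then have "v = par w" "w = par v" using eq by (auto simp: doubleton_eq_iff)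
      moreover have "rk (par v) < rk v" "rk (par w) < rk w" using par v w by auto
      ultimately show False by simp
    qed
  qed
  have "(\<lambda>v. {v, par v}) ` (V - {r}) \<subseteq> E" using par by auto
  then have "card ((\<lambda>v. {v, par v}) ` (V - {r})) \<le> card E" by (rule card_mono[OF fin])
  then have "card (V - {r}) \<le> card E" using card_image[OF inj] by simp
  moreover have "card V \<le> card (V - {r}) + 1"
    using r by (cases "finite V") (auto simp: card_Diff_singleton)
  ultimately show ?thesis by linarith
qed

section \<open>Branches of a tree\<close>

definition adj_avoiding :: "'a set set \<Rightarrow> 'a \<Rightarrow> 'a \<Rightarrow> 'a \<Rightarrow> bool" where
  "adj_avoiding F x a b \<longleftrightarrow> adj F a b \<and> a \<noteq> x \<and> b \<noteq> x"

definition branch :: "'a set set \<Rightarrow> 'a \<Rightarrow> 'a \<Rightarrow> 'a set" where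
  "branch F x y = {z. (adj_avoiding F x)\<^sup>*\<^sup>* z y}"

lemma rtranclp_adj_avoiding_sym: "(adj_avoiding F x)\<^sup>*\<^sup>* a b \<Longrightarrow> (adj_avoiding F x)\<^sup>*\<^sup>* b a"
  by (rule rtranclp_symmetric) (simp_all add: adj_avoiding_def insert_commute)

lemma rtranclp_adj_avoiding_remove_edge:
  assumes "z \<in> e" "(adj_avoiding F z)\<^sup>*\<^sup>* a b"
  shows "(adj (F - {e}))\<^sup>*\<^sup>* a b"
proof (rule rtranclp_rtranclp_mono[OF _ assms(2)])
  fix a b assume "adj_avoiding F z a b"
  then have "adj (F - {e}) a b" using assms(1) unfolding adj_avoiding_def by auto
  then show "(adj (F - {e}))\<^sup>*\<^sup>* a b" by auto
qed

lemma tree_edge_is_bridge: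
  assumes tree: "is_tree I F" and xy: "adj F x y"
  shows "\<not> (adj (F - {{x,y}}))\<^sup>*\<^sup>* x y"
proof
  assume reach: "(adj (F - {{x,y}}))\<^sup>*\<^sup>* x y"
  have ug: "ugraph I F" and con: "connected_graph I F" and cd: "card F = card I - 1"
    using tree unfolding is_tree_def by auto
  have finF: "finite F" using ug by (rule ugraph_finite_edges)
  have xI: "x \<in> I" using ugraph_adjD[OF ug xy] by auto
  have yx: "(adj (F - {{x,y}}))\<^sup>*\<^sup>* y x"
    using rtranclp_symmetric[of "adj (F - {{x,y}})", OF _ reach] by (simp add: insert_commute)
  have "(adj (F - {{x,y}}))\<^sup>*\<^sup>* a b" if "adj F a b" for a b
    using that reach yx by (cases "{a,b} = {x,y}") (auto simp: doubleton_eq_iff)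
  then have "\<forall>v\<in>I. (adj (F - {{x,y}}))\<^sup>*\<^sup>* v x"
    using con xI rtranclp_rtranclp_mono[of "adj F"] unfolding connected_graph_def by blast
  then have "card I \<le> card (F - {{x,y}}) + 1"
    using connected_card_le_Suc_card_edges[of "F - {{x,y}}" x I] finF xI by blast
  moreover have "card (F - {{x,y}}) = card F - 1" using finF xy by simp
  moreover have "card F \<ge> 1" using finF xy by (metis One_nat_def Suc_leI card_gt_0_iff empty_iff)
  ultimately show False using cd by linarith
qed

lemma branch_subset:
  assumes ug: "ugraph I F" and xy: "adj F x y"
  shows "branch F x y \<subseteq> I"
proof
  fix z assume "z \<in> branch F x y"
  then have "(adj_avoiding F x)\<^sup>*\<^sup>* z y" unfolding branch_def by auto
  then show "z \<in> I"
    by (cases rule: converse_rtranclpE) (use ugraph_adjD[OF ug] xy in \<open>auto simp: adj_avoiding_def\<close>)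
qed

lemma notin_branch:
  assumes "x \<noteq> y"
  shows "x \<notin> branch F x y"
proof
  assume "x \<in> branch F x y"
  then have "(adj_avoiding F x)\<^sup>*\<^sup>* x y" unfolding branch_def by simp
  then show False
    using assms by (cases rule: converse_rtranclpE) (auto simp: adj_avoiding_def)
qed

lemma in_branch_self: "y \<in> branch F x y"
  unfolding branch_def by auto

lemma reachable_in_branch:
  assumes "(adj F)\<^sup>*\<^sup>* z x" "z \<noteq> x"
  shows "\<exists>y. adj F x y \<and> z \<in> branch F x y"
  using assms unfolding branch_def
proof (induction rule: converse_rtranclp_induct)
  case base then show ?case by simp
next
  case (step z z')
  show ?case
  proof (cases "z' = x")
    case True
    then show ?thesis using step by (auto simp: insert_commute)
  next
    case False
    then obtain y where "adj F x y" "(adj_avoiding F x)\<^sup>*\<^sup>* z' y" using step by auto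
    moreover have "adj_avoiding F x z z'" using step False unfolding adj_avoiding_def by auto
    ultimately show ?thesis by (blast intro: converse_rtranclp_into_rtranclp)
  qed
qed

lemma tree_branches_disjoint:
  assumes tree: "is_tree I F" and "adj F x y" "adj F x y'" "y \<noteq> y'"
  shows "branch F x y \<inter> branch F x y' = {}"
proof (rule ccontr)
  assume "branch F x y \<inter> branch F x y' \<noteq> {}"
  then obtain w where "(adj_avoiding F x)\<^sup>*\<^sup>* w y" "(adj_avoiding F x)\<^sup>*\<^sup>* w y'"
    unfolding branch_def by auto
  then have "(adj_avoiding F x)\<^sup>*\<^sup>* y' y" by (meson rtranclp_adj_avoiding_sym rtranclp_trans)
  then have "(adj (F - {{x,y}}))\<^sup>*\<^sup>* y' y" by (rule rtranclp_adj_avoiding_remove_edge[rotated]) simp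
  moreover have "adj (F - {{x,y}}) x y'" using assms by (auto simp: doubleton_eq_iff)
  ultimately have "(adj (F - {{x,y}}))\<^sup>*\<^sup>* x y" by (meson converse_rtranclp_into_rtranclp)
  then show False using tree_edge_is_bridge[OF tree assms(2)] by simp
qed

lemma tree_opposite_branches_disjoint:
  assumes tree: "is_tree I F" and xy: "adj F x y"
  shows "branch F x y \<inter> branch F y x = {}"
proof (rule ccontr)
  assume "branch F x y \<inter> branch F y x \<noteq> {}"
  then obtain w where wy: "(adj_avoiding F x)\<^sup>*\<^sup>* w y" and wx: "(adj_avoiding F y)\<^sup>*\<^sup>* w x"
    unfolding branch_def by auto
  have "(adj (F - {{x,y}}))\<^sup>*\<^sup>* w y" by (rule rtranclp_adj_avoiding_remove_edge[OF _ wy]) simp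
  moreover have "(adj (F - {{x,y}}))\<^sup>*\<^sup>* w x" by (rule rtranclp_adj_avoiding_remove_edge[OF _ wx]) simp
  moreover have "(adj (F - {{x,y}}))\<^sup>*\<^sup>* x w"
    by (rule rtranclp_symmetric[OF _ calculation(2)]) (auto simp: insert_commute)
  ultimately have "(adj (F - {{x,y}}))\<^sup>*\<^sup>* x y" by (meson rtranclp_trans)
  then show False using tree_edge_is_bridge[OF tree xy] by simp
qed

lemma tree_branch_psubset:
  assumes tree: "is_tree I F" and xy: "adj F x y" and yz: "adj F y z" and zx: "z \<noteq> x"
  shows "branch F y z \<subset> branch F x y"
proof -
  have ug: "ugraph I F" using tree unfolding is_tree_def by auto
  have xn: "x \<notin> branch F y z"
    using tree_branches_disjoint[OF tree _ yz, of x] xy zx in_branch_self[of x F y]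
    by (auto simp: insert_commute)
  have "(adj_avoiding F x)\<^sup>*\<^sup>* w z" if "(adj_avoiding F y)\<^sup>*\<^sup>* w z" for w
    using that
  proof (induction rule: converse_rtranclp_induct)
    case base then show ?case by simp
  next
    case (step a b)
    have "a \<in> branch F y z" "b \<in> branch F y z" using step unfolding branch_def
      by (auto intro: converse_rtranclp_into_rtranclp)
    then have "adj_avoiding F x a b" using step(1) xn unfolding adj_avoiding_def by auto
    then show ?case using step(3) by (meson converse_rtranclp_into_rtranclp)
  qed
  moreover have "adj_avoiding F x z y" using yz zx ugraph_adjD[OF ug xy]
    unfolding adj_avoiding_def by (auto simp: insert_commute)
  ultimately have "branch F y z \<subseteq> branch F x y"
    unfolding branch_def by (blast intro: rtranclp.rtrancl_into_rtrancl)
  moreover have "y \<notin> branch F y z" using notin_branch ugraph_adjD[OF ug yz] by metis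
  ultimately show ?thesis using in_branch_self[of y F x] by auto
qed

lemma connected_on_subset_branch:
  assumes tree: "is_tree I F" and T: "connected_on F T" "T \<noteq> {}" "T \<subseteq> I" "x \<notin> T" "x \<in> I"
  shows "\<exists>y. adj F x y \<and> T \<subseteq> branch F x y"
proof -
  have con: "connected_graph I F" using tree unfolding is_tree_def by auto
  obtain a where a: "a \<in> T" using T by auto
  then obtain y where y: "adj F x y" "a \<in> branch F x y"
    using reachable_in_branch[of F a x] con T unfolding connected_graph_def by blast
  have "b \<in> branch F x y" if "b \<in> T" for b
  proof -
    have "(adj_within F T)\<^sup>*\<^sup>* b a" using T(1) that a unfolding connected_on_def by auto
    then have "(adj_avoiding F x)\<^sup>*\<^sup>* b a"
      by (rule rtranclp_rtranclp_mono[rotated]) (use T(4) in \<open>auto simp: adj_avoiding_def\<close>)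
    then show ?thesis using y(2) unfolding branch_def by (auto intro: rtranclp_trans)
  qed
  then show ?thesis using y by auto
qed

lemma tree_exists_centroid:
  fixes \<omega> :: "'a \<Rightarrow> 'a \<Rightarrow> real"
  assumes tree: "is_tree I F"
    and opposite: "\<And>x y. adj F x y \<Longrightarrow> \<omega> x y + \<omega> y x \<le> W"
  shows "\<exists>x\<in>I. \<forall>y. adj F x y \<longrightarrow> \<omega> x y \<le> W / 2"
proof (cases "\<exists>x y. adj F x y \<and> \<omega> x y > W / 2")
  case False
  have "I \<noteq> {}" using tree unfolding is_tree_def connected_graph_def by auto
  then show ?thesis using False by (auto simp: not_less)
next
  case True
  have ug: "ugraph I F" using tree unfolding is_tree_def by auto
  have finI: "finite I" using ug unfolding ugraph_def by auto
  let ?heavy = "\<lambda>q. adj F (fst q) (snd q) \<and> \<omega> (fst q) (snd q) > W / 2"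
  from True obtain q0 where "?heavy q0" by auto
  then obtain q where q: "?heavy q"
    and qmin: "\<forall>q'. ?heavy q' \<longrightarrow> card (branch F (fst q) (snd q)) \<le> card (branch F (fst q') (snd q'))"
    using ex_has_least_nat[of ?heavy q0 "\<lambda>q. card (branch F (fst q) (snd q))"] by blast
  obtain x0 y0 where q_def: "q = (x0, y0)" by (cases q)
  have xy0: "adj F x0 y0" "\<omega> x0 y0 > W / 2" using q unfolding q_def by auto
  have "\<omega> y0 z \<le> W / 2" if yz: "adj F y0 z" for z
  proof (cases "z = x0")
    case True
    then show ?thesis using opposite[OF xy0(1)] xy0(2) by simp
  next
    case False
    show ?thesis
    proof (rule ccontr)
      assume "\<not> \<omega> y0 z \<le> W / 2"
      then have "card (branch F x0 y0) \<le> card (branch F y0 z)"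
        using qmin[rule_format, of "(y0, z)"] yz unfolding q_def by auto
      moreover have "branch F y0 z \<subset> branch F x0 y0" using tree_branch_psubset[OF tree xy0(1) yz False] .
      moreover have "finite (branch F x0 y0)" using branch_subset[OF ug xy0(1)] finI
        by (rule finite_subset)
      ultimately show False by (meson leD psubset_card_mono)
    qed
  qed
  moreover have "y0 \<in> I" using ugraph_adjD[OF ug xy0(1)] by auto
  ultimately show ?thesis by blast
qed

lemma tree_exists_subtree_centroid:
  fixes w :: "'j \<Rightarrow> real" and T :: "'j \<Rightarrow> 'a set"
  assumes tree: "is_tree I F" and finJ: "finite J"
    and T: "\<forall>j\<in>J. T j \<subseteq> I \<and> T j \<noteq> {} \<and> connected_on F (T j)"
    and w: "\<forall>j\<in>J. w j \<ge> 0"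
  shows "\<exists>x\<in>I. \<forall>y. adj F x y \<longrightarrow> sum w {j\<in>J. T j \<subseteq> branch F x y} \<le> sum w J / 2"
proof (rule tree_exists_centroid[OF tree])
  fix x y assume xy: "adj F x y"
  let ?B = "\<lambda>x y. {j\<in>J. T j \<subseteq> branch F x y}"
  have "?B x y \<inter> ?B y x = {}"
    using tree_opposite_branches_disjoint[OF tree xy] T by blast
  then have "sum w (?B x y) + sum w (?B y x) = sum w (?B x y \<union> ?B y x)"
    by (intro sum.union_disjoint[symmetric]) (use finJ in auto)
  also have "\<dots> \<le> sum w J" using finJ w by (intro sum_mono2) auto
  finally show "sum w (?B x y) + sum w (?B y x) \<le> sum w J" .
qed

lemma exists_subset_sum_near_half:
  fixes a :: "'b \<Rightarrow> real"
  assumes "finite K" "\<forall>y\<in>K. 0 \<le> a y \<and> a y \<le> \<beta>" "0 \<le> \<beta>"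
  shows "\<exists>S\<subseteq>K. \<bar>2 * sum a S - sum a K\<bar> \<le> \<beta>"
  using assms
proof (induction K rule: finite_induct)
  case empty then show ?case by simp
next
  case (insert y K)
  then obtain S where S: "S \<subseteq> K" "\<bar>2 * sum a S - sum a K\<bar> \<le> \<beta>" by auto
  have fS: "finite S" using S(1) insert(1) by (rule finite_subset)
  have yS: "y \<notin> S" using S(1) insert(2) by auto
  have ay: "0 \<le> a y" "a y \<le> \<beta>" using insert(4) by auto
  have sK: "sum a (insert y K) = a y + sum a K" using insert by simp
  show ?case
  proof (cases "2 * sum a S - sum a K \<le> 0")
    case True
    have "sum a (insert y S) = a y + sum a S" using fS yS by simp
    then have "\<bar>2 * sum a (insert y S) - sum a (insert y K)\<bar> \<le> \<beta>" using sK S(2) ay True by auto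
    moreover have "insert y S \<subseteq> insert y K" using S(1) by auto
    ultimately show ?thesis by blast
  next
    case False
    then have "\<bar>2 * sum a S - sum a (insert y K)\<bar> \<le> \<beta>" using sK S(2) ay by auto
    moreover have "S \<subseteq> insert y K" using S(1) by auto
    ultimately show ?thesis by blast
  qed
qed

lemma tree_subtrees_avoiding_vertex:
  assumes tree: "is_tree I F" and x: "x \<in> I"
    and T: "\<forall>j\<in>J. T j \<subseteq> I \<and> T j \<noteq> {} \<and> connected_on F (T j)"
  shows "{j\<in>J. x \<notin> T j} = (\<Union>y\<in>{y. adj F x y}. {j\<in>J. T j \<subseteq> branch F x y})"
proof
  have ug: "ugraph I F" using tree unfolding is_tree_def by auto
  show "(\<Union>y\<in>{y. adj F x y}. {j\<in>J. T j \<subseteq> branch F x y}) \<subseteq> {j\<in>J. x \<notin> T j}"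
  proof
    fix j assume "j \<in> (\<Union>y\<in>{y. adj F x y}. {j\<in>J. T j \<subseteq> branch F x y})"
    then obtain y where y: "adj F x y" "j \<in> J" "T j \<subseteq> branch F x y" by auto
    have "x \<noteq> y" using ugraph_adjD[OF ug y(1)] by simp
    then have "x \<notin> branch F x y" by (rule notin_branch)
    then show "j \<in> {j\<in>J. x \<notin> T j}" using y by auto
  qed
  show "{j\<in>J. x \<notin> T j} \<subseteq> (\<Union>y\<in>{y. adj F x y}. {j\<in>J. T j \<subseteq> branch F x y})"
  proof
    fix j assume j: "j \<in> {j\<in>J. x \<notin> T j}"
    then have xT: "x \<notin> T j" by simp
    have "connected_on F (T j)" "T j \<noteq> {}" "T j \<subseteq> I" using j T by auto
    then obtain y where "adj F x y" "T j \<subseteq> branch F x y"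
      using connected_on_subset_branch[OF tree _ _ _ xT x] by blast
    then show "j \<in> (\<Union>y\<in>{y. adj F x y}. {j\<in>J. T j \<subseteq> branch F x y})" using j by auto
  qed
qed

lemma tree_balanced_split:
  fixes w :: "'j \<Rightarrow> real" and T :: "'j \<Rightarrow> 'a set"
  assumes tree: "is_tree I F" and finJ: "finite J"
    and T: "\<forall>j\<in>J. T j \<subseteq> I \<and> T j \<noteq> {} \<and> connected_on F (T j)"
    and w: "\<forall>j\<in>J. w j \<ge> 0"
  shows "\<exists>x\<in>I. \<exists>J1 J2. J1 \<union> J2 = {j\<in>J. x \<notin> T j} \<and> J1 \<inter> J2 = {} \<and>
           (\<forall>j1\<in>J1. \<forall>j2\<in>J2. T j1 \<inter> T j2 = {}) \<and> \<bar>sum w J1 - sum w J2\<bar> \<le> sum w J / 2"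
proof -
  have ug: "ugraph I F" using tree unfolding is_tree_def by auto
  have finI: "finite I" using ug unfolding ugraph_def by auto
  define W where "W = sum w J"
  define B where "B x y = {j\<in>J. T j \<subseteq> branch F x y}" for x y
  have W0: "0 \<le> W" unfolding W_def using w by (auto intro: sum_nonneg)
  obtain x where xI: "x \<in> I" and xc: "\<forall>y. adj F x y \<longrightarrow> sum w (B x y) \<le> W / 2"
    using tree_exists_subtree_centroid[OF tree finJ T w] unfolding W_def B_def by blast
  define N where "N = {y. adj F x y}"
  have "N \<subseteq> I" using ugraph_adjD[OF ug] unfolding N_def by blast
  then have finN: "finite N" using finI by (rule finite_subset)
  obtain S where S: "S \<subseteq> N" "\<bar>2 * sum (\<lambda>y. sum w (B x y)) S - sum (\<lambda>y. sum w (B x y)) N\<bar> \<le> W / 2"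
  proof -
    have "0 \<le> sum w (B x y)" for y using w unfolding B_def by (auto intro: sum_nonneg)
    then have "\<forall>y\<in>N. 0 \<le> sum w (B x y) \<and> sum w (B x y) \<le> W / 2" using xc unfolding N_def by auto
    from exists_subset_sum_near_half[OF finN this] W0 show ?thesis using that by auto
  qed
  define Jx where "Jx = {j\<in>J. x \<notin> T j}"
  have BJx: "\<Union>(B x ` N) = Jx"
    using tree_subtrees_avoiding_vertex[OF tree xI T] unfolding Jx_def B_def N_def by simp
  have Bdisj: "\<forall>y\<in>N. \<forall>y'\<in>N. y \<noteq> y' \<longrightarrow> B x y \<inter> B x y' = {}"
    unfolding B_def N_def using tree_branches_disjoint[OF tree] T by blast
  have finB: "\<forall>y\<in>N. finite (B x y)" unfolding B_def using finJ by auto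
  define J1 where "J1 = \<Union>(B x ` S)"
  define J2 where "J2 = Jx - J1"
  have J1sub: "J1 \<subseteq> Jx" unfolding J1_def using BJx S(1) by auto
  have s1: "sum w J1 = sum (\<lambda>y. sum w (B x y)) S" unfolding J1_def
    by (rule sum.UNION_disjoint) (use S(1) finN finB Bdisj in \<open>auto intro: finite_subset, blast\<close>)
  have sN: "sum w Jx = sum (\<lambda>y. sum w (B x y)) N" unfolding BJx[symmetric]
    by (rule sum.UNION_disjoint) (use finN finB Bdisj in auto)
  have finJx: "finite Jx" unfolding Jx_def using finJ by auto
  have s2: "sum w J2 = sum w Jx - sum w J1" unfolding J2_def
    using sum_diff[OF finJx J1sub] by simp
  have cross: "\<forall>j1\<in>J1. \<forall>j2\<in>J2. T j1 \<inter> T j2 = {}"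
  proof (intro ballI)
    fix j1 j2 assume j1: "j1 \<in> J1" and j2: "j2 \<in> J2"
    obtain y1 where y1: "y1 \<in> S" "j1 \<in> B x y1" using j1 unfolding J1_def by auto
    obtain y2 where y2: "y2 \<in> N" "j2 \<in> B x y2" using j2 BJx unfolding J2_def by auto
    have "y1 \<noteq> y2" using y1 y2 j2 unfolding J1_def J2_def by auto
    then have "branch F x y1 \<inter> branch F x y2 = {}"
      using tree_branches_disjoint[OF tree] y1(1) y2(1) S(1) unfolding N_def by auto
    then show "T j1 \<inter> T j2 = {}" using y1(2) y2(2) unfolding B_def by auto
  qed
  have "J1 \<union> J2 = Jx" "J1 \<inter> J2 = {}" using J1sub unfolding J2_def by auto
  moreover have "\<bar>sum w J1 - sum w J2\<bar> \<le> sum w J / 2"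
    using S(2) s1 s2 sN unfolding W_def by (simp add: abs_if)
  ultimately show ?thesis using xI cross unfolding Jx_def by blast
qed

section \<open>Partitioning a connected graph of bounded degree\<close>

definition connected_partition :: "'a set set \<Rightarrow> 'a set \<Rightarrow> nat \<Rightarrow> nat \<Rightarrow> 'a set set \<Rightarrow> bool" where
  "connected_partition H U M L PP \<longleftrightarrow>
     (\<forall>P\<in>PP. P \<noteq> {} \<and> P \<subseteq> U \<and> connected_on H P \<and> card P \<le> M) \<and>
     (\<forall>P\<in>PP. \<forall>Q\<in>PP. P \<noteq> Q \<longrightarrow> P \<inter> Q = {}) \<and> \<Union>PP = U \<and> card {P\<in>PP. card P < L} \<le> 1"

lemma connected_partition_insert:
  assumes PP: "connected_partition H (U - D) M L PP"
    and D: "D \<noteq> {}" "D \<subseteq> U" "connected_on H D" "card D \<le> M" "L \<le> card D"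
  shows "connected_partition H U M L (insert D PP)"
  unfolding connected_partition_def
proof (intro conjI)
  show "\<forall>P\<in>insert D PP. P \<noteq> {} \<and> P \<subseteq> U \<and> connected_on H P \<and> card P \<le> M"
    using PP D unfolding connected_partition_def by auto
  show "\<forall>P\<in>insert D PP. \<forall>Q\<in>insert D PP. P \<noteq> Q \<longrightarrow> P \<inter> Q = {}"
    using PP unfolding connected_partition_def by blast
  show "\<Union>(insert D PP) = U" using PP D unfolding connected_partition_def by auto
  have "{P\<in>insert D PP. card P < L} = {P\<in>PP. card P < L}" using D(5) by auto
  then show "card {P\<in>insert D PP. card P < L} \<le> 1"
    using PP unfolding connected_partition_def by simp
qed

definition parent_step :: "'a set \<Rightarrow> 'a \<Rightarrow> ('a \<Rightarrow> 'a) \<Rightarrow> 'a \<Rightarrow> 'a \<Rightarrow> bool" where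
  "parent_step U r par a b \<longleftrightarrow> a \<in> U \<and> a \<noteq> r \<and> b = par a"

definition descendants :: "'a set \<Rightarrow> 'a \<Rightarrow> ('a \<Rightarrow> 'a) \<Rightarrow> 'a \<Rightarrow> 'a set" where
  "descendants U r par v = {w\<in>U. (parent_step U r par)\<^sup>*\<^sup>* w v}"

definition children :: "'a set \<Rightarrow> 'a \<Rightarrow> ('a \<Rightarrow> 'a) \<Rightarrow> 'a \<Rightarrow> 'a set" where
  "children U r par v = {c\<in>U-{r}. par c = v}"

locale ranked_rooted_tree =
  fixes U :: "'a set" and r :: 'a and par :: "'a \<Rightarrow> 'a" and rk :: "'a \<Rightarrow> nat"
  assumes finite_U: "finite U" and root_in: "r \<in> U"
    and par_in: "\<And>v. v \<in> U - {r} \<Longrightarrow> par v \<in> U"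
    and rk_par_less: "\<And>v. v \<in> U - {r} \<Longrightarrow> rk (par v) < rk v"
begin

abbreviation "desc \<equiv> descendants U r par"
abbreviation "ch \<equiv> children U r par"

lemma descendants_subset: "desc v \<subseteq> U"
  unfolding descendants_def by auto

lemma in_descendants_self: "v \<in> U \<Longrightarrow> v \<in> desc v"
  unfolding descendants_def by auto

lemma rk_le_of_parent_path: "(parent_step U r par)\<^sup>*\<^sup>* a b \<Longrightarrow> rk b \<le> rk a"
proof (induction rule: rtranclp_induct)
  case (step y z)
  then have "rk z < rk y" using rk_par_less unfolding parent_step_def by auto
  then show ?case using step by simp
qed simp

lemma descendants_root: "desc r = U"
proof -
  have "(parent_step U r par)\<^sup>*\<^sup>* w r" if "w \<in> U" for w
    using that
  proof (induction "rk w" arbitrary: w rule: less_induct)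
    case less
    show ?case
    proof (cases "w = r")
      case False
      then have "parent_step U r par w (par w)" "par w \<in> U" "rk (par w) < rk w"
        using less.prems par_in rk_par_less unfolding parent_step_def by auto
      then show ?thesis using less.hyps by (blast intro: converse_rtranclp_into_rtranclp)
    qed simp
  qed
  then show ?thesis unfolding descendants_def by auto
qed

lemma descendants_child_psubset:
  assumes "c \<in> ch v"
  shows "desc c \<subset> desc v"
proof -
  have step: "parent_step U r par c v" using assms unfolding children_def parent_step_def by auto
  then have "desc c \<subseteq> desc v"
    unfolding descendants_def by (auto intro: rtranclp.rtrancl_into_rtrancl)
  moreover have "v \<notin> desc c"
  proof
    assume "v \<in> desc c"
    then have "rk c \<le> rk v" using rk_le_of_parent_path unfolding descendants_def by auto
    moreover have "rk v < rk c" using assms rk_par_less unfolding children_def by auto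
    ultimately show False by simp
  qed
  moreover have "v \<in> desc v" using step par_in in_descendants_self unfolding parent_step_def by auto
  ultimately show ?thesis by blast
qed

lemma descendants_subset_children: "desc v \<subseteq> insert v (\<Union>c\<in>ch v. desc c)"
proof
  fix w assume "w \<in> desc v"
  then have wU: "w \<in> U" and wv: "(parent_step U r par)\<^sup>*\<^sup>* w v" unfolding descendants_def by auto
  from wv show "w \<in> insert v (\<Union>c\<in>ch v. desc c)"
  proof (cases rule: rtranclp.cases)
    case (rtrancl_into_rtrancl c)
    then have "c \<in> ch v" unfolding parent_step_def children_def by auto
    then show ?thesis using rtrancl_into_rtrancl wU unfolding descendants_def by auto
  qed simp
qed

lemma card_descendants_le:
  assumes "card (ch v) \<le> Delta" and small: "\<forall>c\<in>ch v. card (desc c) < L"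
    and L: "L \<ge> 1" and Delta: "Delta \<ge> 1"
  shows "card (desc v) \<le> Delta * L"
proof -
  have finch: "finite (ch v)" unfolding children_def using finite_U by auto
  have findesc: "finite (desc c)" for c using finite_subset[OF descendants_subset finite_U] .
  have "card (desc v) \<le> card (insert v (\<Union>c\<in>ch v. desc c))"
    by (rule card_mono) (use finch findesc descendants_subset_children in auto)
  also have "\<dots> \<le> Suc (card (\<Union>c\<in>ch v. desc c))" by (rule card_insert_le_m1) simp_all
  also have "card (\<Union>c\<in>ch v. desc c) \<le> (\<Sum>c\<in>ch v. card (desc c))"
    by (rule card_UN_le[OF finch])
  also have "\<dots> \<le> (\<Sum>c\<in>ch v. (L - 1))" using small by (intro sum_mono) auto
  also have "\<dots> \<le> Delta * (L - 1)" using assms(1) by simp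
  finally have "card (desc v) \<le> Suc (Delta * (L - 1))" by simp
  moreover have "Suc (Delta * (L - 1)) \<le> Delta * L" using L Delta
    by (cases L) (auto simp: algebra_simps)
  ultimately show ?thesis by linarith
qed

lemma connected_on_descendants:
  assumes adj_par: "\<forall>w\<in>U-{r}. adj H w (par w)" and v: "v \<in> U"
  shows "connected_on H (desc v)"
proof (rule connected_onI[where v = v], intro ballI)
  fix w assume "w \<in> desc v"
  then have "(parent_step U r par)\<^sup>*\<^sup>* w v" unfolding descendants_def by auto
  then show "(adj_within H (desc v))\<^sup>*\<^sup>* w v"
  proof (induction rule: converse_rtranclp_induct)
    case (step a b)
    have "a \<in> desc v" "b \<in> desc v" using step v par_in unfolding descendants_def parent_step_def
      by (auto intro: converse_rtranclp_into_rtranclp)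
    moreover have "adj H a b" using step(1) adj_par unfolding parent_step_def by auto
    ultimately show ?case using step(3) by (auto intro: converse_rtranclp_into_rtranclp)
  qed simp
qed

lemma remove_descendants:
  assumes v: "v \<in> U" "v \<noteq> r"
  shows "ranked_rooted_tree (U - desc v) r par rk"
proof
  show "finite (U - desc v)" using finite_U by simp
  have "r \<notin> desc v"
  proof
    assume "r \<in> desc v"
    then have "(parent_step U r par)\<^sup>*\<^sup>* r v" unfolding descendants_def by auto
    then show False using v(2) by (cases rule: converse_rtranclpE) (auto simp: parent_step_def)
  qed
  then show "r \<in> U - desc v" using root_in by simp
  show "rk (par w) < rk w" if "w \<in> U - desc v - {r}" for w using that rk_par_less by auto
  show "par w \<in> U - desc v" if w: "w \<in> U - desc v - {r}" for w
  proof -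
    have "par w \<notin> desc v"
    proof
      assume "par w \<in> desc v"
      then have "(parent_step U r par)\<^sup>*\<^sup>* w v" using w unfolding descendants_def parent_step_def
        by (auto intro: converse_rtranclp_into_rtranclp)
      then show False using w unfolding descendants_def by auto
    qed
    then show ?thesis using w par_in by auto
  qed
qed

end

text \<open>Cutting off a minimal subtree with at least L vertices, repeatedly, partitions the tree.\<close>
lemma exists_connected_partition_rooted:
  assumes "ranked_rooted_tree U r par rk"
    and "\<forall>v\<in>U-{r}. adj H v (par v)"
    and "\<forall>v\<in>U. card (children U r par v) \<le> Delta"
    and L: "L \<ge> 1" and Delta: "Delta \<ge> 1"
  shows "\<exists>PP. connected_partition H U (Delta * L) L PP"
  using assms(1-3)
proof (induction "card U" arbitrary: U rule: less_induct)
  case less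
  interpret ranked_rooted_tree U r par rk by (rule less.prems(1))
  show ?case
  proof (cases "card U \<le> Delta * L")
    case True
    have "card {P\<in>{U}. card P < L} \<le> 1"
      by (rule order_trans[OF card_mono[of "{U}"]]) auto
    then have "connected_partition H U (Delta * L) L {U}" unfolding connected_partition_def
      using True connected_on_descendants[OF less.prems(2) root_in] descendants_root root_in by auto
    then show ?thesis by blast
  next
    case False
    have "L \<le> Delta * L" using Delta by simp
    moreover have "card (desc r) = card U" by (simp add: descendants_root)
    ultimately have "L \<le> card (desc r)" using False by linarith
    then obtain v where v: "v \<in> U" "L \<le> card (desc v)"
      and vmin: "\<forall>u. u \<in> U \<and> L \<le> card (desc u) \<longrightarrow> card (desc v) \<le> card (desc u)"
      using ex_has_least_nat[of "\<lambda>u. u \<in> U \<and> L \<le> card (desc u)" r "\<lambda>u. card (desc u)"] root_in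
      by blast
    have "card (desc c) < L" if c: "c \<in> ch v" for c
    proof -
      have "card (desc c) < card (desc v)"
        using psubset_card_mono[OF finite_subset[OF descendants_subset finite_U]
            descendants_child_psubset[OF c]] .
      moreover have "c \<in> U" using c unfolding children_def by auto
      ultimately show ?thesis using vmin by force
    qed
    then have vsz: "card (desc v) \<le> Delta * L"
      using card_descendants_le less.prems(3) v(1) L Delta by blast
    then have "v \<noteq> r" using False descendants_root by auto
    have rest: "ranked_rooted_tree (U - desc v) r par rk" using remove_descendants[OF v(1) \<open>v \<noteq> r\<close>] .
    have "U - desc v \<subset> U" using in_descendants_self[OF v(1)] descendants_subset by blast
    then have "card (U - desc v) < card U" by (rule psubset_card_mono[OF finite_U])
    moreover have "\<forall>w\<in>U - desc v - {r}. adj H w (par w)" using less.prems(2) by auto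
    moreover have "\<forall>w\<in>U - desc v. card (children (U - desc v) r par w) \<le> Delta"
    proof
      fix w assume w: "w \<in> U - desc v"
      have "card (children (U - desc v) r par w) \<le> card (ch w)"
        by (rule card_mono) (use finite_U in \<open>auto simp: children_def\<close>)
      then show "card (children (U - desc v) r par w) \<le> Delta" using w less.prems(3) by force
    qed
    ultimately obtain PP where PP: "connected_partition H (U - desc v) (Delta * L) L PP"
      using less.hyps rest by blast
    have "connected_partition H U (Delta * L) L (insert (desc v) PP)"
      by (rule connected_partition_insert[OF PP])
        (use in_descendants_self[OF v(1)] descendants_subset[of v]
          connected_on_descendants[OF less.prems(2) v(1)] vsz v(2) in auto)
    then show ?thesis by blast
  qed
qed

lemma exists_connected_partition:
  assumes ug: "ugraph V H" and con: "connected_graph V H"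
    and deg: "\<forall>v\<in>V. degree H v \<le> Delta" and L: "L \<ge> 1" and Delta: "Delta \<ge> 1"
  shows "\<exists>PP. connected_partition H V (Delta * L) L PP"
proof -
  obtain r where rV: "r \<in> V" using con unfolding connected_graph_def by auto
  have finH: "finite H" using ug by (rule ugraph_finite_edges)
  have reach: "\<forall>v\<in>V. (adj H)\<^sup>*\<^sup>* v r" using con rV unfolding connected_graph_def by auto
  obtain par and rk :: "'a \<Rightarrow> nat" where par: "\<forall>v\<in>V-{r}. adj H v (par v) \<and> rk (par v) < rk v"
    using exists_ranked_parent[OF reach] by (elim exE) blast
  have tree: "ranked_rooted_tree V r par rk"
  proof
    show "finite V" using ug unfolding ugraph_def by simp
    show "r \<in> V" by (rule rV)
    show "par v \<in> V" if "v \<in> V - {r}" for v using par that ugraph_adjD[OF ug] by blast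
    show "rk (par v) < rk v" if "v \<in> V - {r}" for v using par that by blast
  qed
  have deg_children: "\<forall>v\<in>V. card (children V r par v) \<le> Delta"
  proof
    fix v assume vV: "v \<in> V"
    have inj: "inj_on (\<lambda>c. {c, v}) (children V r par v)"
      by (rule inj_onI) (auto simp: doubleton_eq_iff)
    have "(\<lambda>c. {c, v}) ` children V r par v \<subseteq> {e\<in>H. v \<in> e}"
      using par unfolding children_def by auto
    then have "card ((\<lambda>c. {c, v}) ` children V r par v) \<le> card {e\<in>H. v \<in> e}"
      by (rule card_mono[rotated]) (use finH in simp)
    then have "card (children V r par v) \<le> degree H v"
      unfolding degree_def using card_image[OF inj] by simp
    then show "card (children V r par v) \<le> Delta" using deg vV by force
  qed
  show ?thesis
    by (rule exists_connected_partition_rooted[OF tree _ deg_children L Delta]) (use par in blast)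
qed

section \<open>Tree decompositions\<close>

definition bags_meeting :: "nat set \<Rightarrow> (nat \<Rightarrow> 'a set) \<Rightarrow> 'a set \<Rightarrow> nat set" where
  "bags_meeting I B P = {i\<in>I. \<exists>a\<in>P. a \<in> B i}"

lemma bags_meeting_nonempty:
  assumes "tree_decomp V R I F B" "P \<subseteq> V" "P \<noteq> {}"
  shows "bags_meeting I B P \<noteq> {}"
proof -
  obtain a where a: "a \<in> P" using assms(3) by blast
  then obtain i where "i \<in> I" "a \<in> B i" using assms(1,2) unfolding tree_decomp_def by blast
  then show ?thesis using a unfolding bags_meeting_def by blast
qed

lemma connected_on_bags_meeting:
  assumes td: "tree_decomp V R I F B" and HR: "H \<subseteq> R" and P: "P \<subseteq> V" "connected_on H P"
  shows "connected_on F (bags_meeting I B P)"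
proof -
  define T where "T = bags_meeting I B P"
  have sub: "\<forall>v\<in>V. connected_graph {i\<in>I. v \<in> B i} {f\<in>F. \<forall>i\<in>f. v \<in> B i}"
    and edges: "\<forall>e\<in>R. \<exists>i\<in>I. e \<subseteq> B i"
    using td unfolding tree_decomp_def by auto
  have inner: "(adj_within F T)\<^sup>*\<^sup>* i i'" if "a \<in> P" "i \<in> I" "a \<in> B i" "i' \<in> I" "a \<in> B i'" for a i i'
  proof -
    have "(adj {f\<in>F. \<forall>i\<in>f. a \<in> B i})\<^sup>*\<^sup>* i i'"
      using sub that P(1) unfolding connected_graph_def by blast
    then show ?thesis
    proof (rule rtranclp_rtranclp_mono[rotated])
      fix x y assume xy: "adj {f\<in>F. \<forall>i\<in>f. a \<in> B i} x y"
      moreover have "x \<in> I" "y \<in> I" using xy td ugraph_adjD[of I F x y]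
        unfolding tree_decomp_def is_tree_def by auto
      ultimately have "adj_within F T x y" unfolding T_def bags_meeting_def using that(1) by auto
      then show "(adj_within F T)\<^sup>*\<^sup>* x y" by auto
    qed
  qed
  have path: "\<forall>i\<in>I. \<forall>i'\<in>I. a \<in> B i \<longrightarrow> b \<in> B i' \<longrightarrow> (adj_within F T)\<^sup>*\<^sup>* i i'"
    if ab: "(adj_within H P)\<^sup>*\<^sup>* a b" and aP: "a \<in> P" for a b
    using ab
  proof (induction rule: rtranclp_induct)
    case base then show ?case using inner aP by blast
  next
    case (step b c)
    show ?case
    proof (intro ballI impI)
      fix i i' assume ii: "i \<in> I" "i' \<in> I" "a \<in> B i" "c \<in> B i'"
      obtain i0 where i0: "i0 \<in> I" "{b, c} \<subseteq> B i0" using edges step(2) HR by blast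
      have "(adj_within F T)\<^sup>*\<^sup>* i i0" using step(3) ii i0 by auto
      moreover have "(adj_within F T)\<^sup>*\<^sup>* i0 i'" using inner[of c i0 i'] step(2) ii i0 by auto
      ultimately show "(adj_within F T)\<^sup>*\<^sup>* i i'" by (rule rtranclp_trans)
    qed
  qed
  show ?thesis unfolding connected_on_def
  proof (intro ballI)
    fix i i' assume "i \<in> bags_meeting I B P" "i' \<in> bags_meeting I B P"
    then obtain a b where "a \<in> P" "b \<in> P" "i \<in> I" "i' \<in> I" "a \<in> B i" "b \<in> B i'"
      unfolding bags_meeting_def by auto
    moreover have "(adj_within H P)\<^sup>*\<^sup>* a b"
      using P(2) calculation unfolding connected_on_def by auto
    ultimately show "(adj_within F (bags_meeting I B P))\<^sup>*\<^sup>* i i'" using path unfolding T_def by blast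
  qed
qed

lemma card_disjoint_family_meeting_le:
  assumes disj: "\<forall>P\<in>PP. \<forall>Q\<in>PP. P \<noteq> Q \<longrightarrow> P \<inter> Q = {}" and X: "finite X"
  shows "card {P\<in>PP. \<exists>a\<in>P. a \<in> X} \<le> card X"
proof -
  define K where "K = {P\<in>PP. \<exists>a\<in>P. a \<in> X}"
  define f where "f P = (SOME a. a \<in> P \<and> a \<in> X)" for P
  have fP: "f P \<in> P \<and> f P \<in> X" if "P \<in> K" for P
  proof -
    have "\<exists>a. a \<in> P \<and> a \<in> X" using that unfolding K_def by auto
    then show ?thesis unfolding f_def by (rule someI_ex)
  qed
  have inj: "inj_on f K"
  proof (rule inj_onI)
    fix P Q assume PQ: "P \<in> K" "Q \<in> K" "f P = f Q"
    have "f P \<in> P" "f P \<in> Q" using fP[OF PQ(1)] fP[OF PQ(2)] PQ(3) by auto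
    moreover have "P \<in> PP" "Q \<in> PP" using PQ unfolding K_def by auto
    ultimately show "P = Q" using disj by blast
  qed
  have "f ` K \<subseteq> X" using fP by auto
  then have "card (f ` K) \<le> card X" by (rule card_mono[OF X])
  then show ?thesis using card_image[OF inj] unfolding K_def by simp
qed

lemma card_Union_parts:
  assumes PP: "connected_partition H V M L PP" and finV: "finite V" and J: "J \<subseteq> PP"
  shows "real (card (\<Union>J)) = (\<Sum>P\<in>J. real (card P))"
proof -
  have "pairwise disjnt J" using PP J unfolding connected_partition_def pairwise_def disjnt_def by blast
  moreover have "finite A" if "A \<in> J" for A
  proof -
    have "A \<subseteq> V" using that PP J unfolding connected_partition_def by blast
    then show ?thesis using finV by (rule finite_subset)
  qed
  ultimately have "card (\<Union>J) = sum card J" by (rule card_Union_disjoint)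
  then show ?thesis by simp
qed

lemma sum_card_parts_meeting_bag_le:
  assumes td: "tree_decomp V R I F B" and bags: "\<forall>i\<in>I. card (B i) \<le> k + 1"
    and PP: "connected_partition H V M L PP" and finV: "finite V" and x: "x \<in> I"
  shows "(\<Sum>P\<in>{P\<in>PP. x \<in> bags_meeting I B P}. real (card P)) \<le> real ((k+1) * M)"
proof -
  define K where "K = {P\<in>PP. x \<in> bags_meeting I B P}"
  have PPd: "\<forall>P\<in>PP. \<forall>Q\<in>PP. P \<noteq> Q \<longrightarrow> P \<inter> Q = {}" and PPM: "\<forall>P\<in>PP. card P \<le> M"
    using PP unfolding connected_partition_def by auto
  have "K = {P\<in>PP. \<exists>a\<in>P. a \<in> B x}" using x unfolding K_def bags_meeting_def by auto
  moreover have "finite (B x)" using td x finV unfolding tree_decomp_def by (auto intro: finite_subset)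
  ultimately have "card K \<le> card (B x)" using card_disjoint_family_meeting_le[OF PPd] by simp
  then have cK: "card K \<le> k + 1" using bags x by force
  have "(\<Sum>P\<in>K. real (card P)) \<le> real (card K) * real M"
    using sum_bounded_above[of K "\<lambda>P. real (card P)" "real M"] PPM unfolding K_def by auto
  also have "\<dots> \<le> real ((k+1) * M)"
    unfolding of_nat_mult[symmetric] of_nat_le_iff using cK by (rule mult_right_mono) simp
  finally show ?thesis unfolding K_def .
qed

text \<open>The parts induce subtrees of the decomposition tree; a balanced vertex of that tree meets at
  most k + 1 parts, and no bag meets parts from both sides.\<close>
lemma tree_decomp_separates_partition:
  assumes td: "tree_decomp V R I F B" and bags: "\<forall>i\<in>I. card (B i) \<le> k + 1"
    and PP: "connected_partition H V M L PP" and HR: "H \<subseteq> R" and finV: "finite V"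
  shows "\<exists>J1 J2. J1 \<subseteq> PP \<and> J2 \<subseteq> PP \<and> J1 \<inter> J2 = {} \<and> (\<forall>a\<in>\<Union>J1. \<forall>b\<in>\<Union>J2. \<not> adj R a b) \<and>
     real (card V) \<le> 4 * real (card (\<Union>J1)) + 2 * real ((k+1) * M) \<and>
     real (card V) \<le> 4 * real (card (\<Union>J2)) + 2 * real ((k+1) * M)"
proof -
  have tree: "is_tree I F" and edges: "\<forall>e\<in>R. \<exists>i\<in>I. e \<subseteq> B i"
    using td unfolding tree_decomp_def by auto
  have PPp: "\<forall>P\<in>PP. P \<noteq> {} \<and> P \<subseteq> V \<and> connected_on H P \<and> card P \<le> M" and PPu: "\<Union>PP = V"
    using PP unfolding connected_partition_def by auto
  have finPP: "finite PP" using finV PPu by (simp add: finite_UnionD)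
  define w where "w P = real (card P)" for P :: "'a set"
  have "\<forall>P\<in>PP. bags_meeting I B P \<subseteq> I \<and> bags_meeting I B P \<noteq> {} \<and> connected_on F (bags_meeting I B P)"
  proof
    fix P assume "P \<in> PP"
    then have P: "P \<noteq> {}" "P \<subseteq> V" "connected_on H P" using PPp by auto
    have "bags_meeting I B P \<subseteq> I" unfolding bags_meeting_def by auto
    with bags_meeting_nonempty[OF td P(2,1)] connected_on_bags_meeting[OF td HR P(2,3)]
    show "bags_meeting I B P \<subseteq> I \<and> bags_meeting I B P \<noteq> {} \<and> connected_on F (bags_meeting I B P)"
      by blast
  qed
  from tree_balanced_split[OF tree finPP this, where w = w]
  obtain x J1 J2 where xI: "x \<in> I" and J12: "J1 \<union> J2 = {P\<in>PP. x \<notin> bags_meeting I B P}" "J1 \<inter> J2 = {}"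
    and cr: "\<forall>P\<in>J1. \<forall>Q\<in>J2. bags_meeting I B P \<inter> bags_meeting I B Q = {}"
    and bal: "\<bar>sum w J1 - sum w J2\<bar> \<le> sum w PP / 2"
    unfolding w_def by auto
  define Kx where "Kx = {P\<in>PP. x \<in> bags_meeting I B P}"
  have J1P: "J1 \<subseteq> PP" and J2P: "J2 \<subseteq> PP" using J12 by auto
  have fin: "finite J1" "finite J2" "finite Kx"
    using J1P J2P finPP unfolding Kx_def by (auto intro: finite_subset)
  have "PP = (J1 \<union> J2) \<union> Kx" "(J1 \<union> J2) \<inter> Kx = {}" using J12 unfolding Kx_def by auto
  then have "sum w PP = sum w J1 + sum w J2 + sum w Kx"
    using fin J12(2) by (simp add: sum.union_disjoint)
  moreover have "sum w PP = real (card V)"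
    using card_Union_parts[OF PP finV order_refl] PPu unfolding w_def by simp
  ultimately have sum3: "real (card V) = sum w J1 + sum w J2 + sum w Kx" by simp
  have sK: "sum w Kx \<le> real ((k+1) * M)"
    using sum_card_parts_meeting_bag_le[OF td bags PP finV xI] unfolding Kx_def w_def .
  have "real (card (\<Union>J1)) = sum w J1" "real (card (\<Union>J2)) = sum w J2"
    unfolding w_def by (rule card_Union_parts[OF PP finV J1P], rule card_Union_parts[OF PP finV J2P])
  moreover have "sum w J1 - sum w J2 \<le> sum w PP / 2" "sum w J2 - sum w J1 \<le> sum w PP / 2"
    using bal by linarith+
  ultimately have "real (card V) \<le> 4 * real (card (\<Union>J1)) + 2 * real ((k+1) * M)"
    "real (card V) \<le> 4 * real (card (\<Union>J2)) + 2 * real ((k+1) * M)"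
    using sum3 sK \<open>sum w PP = real (card V)\<close> by linarith+
  moreover have "\<forall>a\<in>\<Union>J1. \<forall>b\<in>\<Union>J2. \<not> adj R a b"
  proof (intro ballI notI)
    fix a b assume a: "a \<in> \<Union>J1" and b: "b \<in> \<Union>J2" and ab: "adj R a b"
    obtain P Q where PQ: "P \<in> J1" "Q \<in> J2" "a \<in> P" "b \<in> Q" using a b by auto
    obtain i where "i \<in> I" "{a, b} \<subseteq> B i" using edges ab by blast
    then have "i \<in> bags_meeting I B P \<inter> bags_meeting I B Q" using PQ unfolding bags_meeting_def by auto
    then show False using cr PQ by blast
  qed
  ultimately show ?thesis using J1P J2P J12(2) by blast
qed

lemma tree_decomp_single_bag:
  assumes "finite V" "V \<noteq> {}" "\<forall>e\<in>E. e \<subseteq> V"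
  shows "tree_decomp V E {0} {} (\<lambda>_. V)"
  using assms unfolding tree_decomp_def is_tree_def ugraph_def connected_graph_def by auto

lemma treewidth_attained:
  assumes "finite V" "V \<noteq> {}" "\<forall>e\<in>E. e \<subseteq> V"
  shows "\<exists>I F B. tree_decomp V E I F B \<and> (\<forall>i\<in>I. card (B i) \<le> treewidth V E + 1)"
proof -
  have "\<exists>I F B. tree_decomp V E I F B \<and> (\<forall>i\<in>I. card (B i) \<le> card V + 1)"
    using tree_decomp_single_bag[OF assms] by fastforce
  then show ?thesis unfolding treewidth_def by (rule LeastI)
qed

lemma treewidth_mono:
  assumes "finite V" "V \<noteq> {}" "\<forall>e\<in>E. e \<subseteq> V" "E' \<subseteq> E"
  shows "treewidth V E' \<le> treewidth V E"
proof -
  obtain I F B where td: "tree_decomp V E I F B" and b: "\<forall>i\<in>I. card (B i) \<le> treewidth V E + 1"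
    using treewidth_attained[OF assms(1-3)] by blast
  have "tree_decomp V E' I F B" using td assms(4) unfolding tree_decomp_def by blast
  then have "\<exists>I F B. tree_decomp V E' I F B \<and> (\<forall>i\<in>I. card (B i) \<le> treewidth V E + 1)"
    using b by blast
  then show ?thesis unfolding treewidth_def[of V E'] by (rule Least_le)
qed

section \<open>The random graph\<close>

lemma prob_ge_one_minus_of_support:
  assumes "\<And>x. x \<in> set_pmf M \<Longrightarrow> x \<notin> Bad \<Longrightarrow> x \<in> Good"
    and "measure_pmf.prob M Bad \<le> b"
  shows "measure_pmf.prob M Good \<ge> 1 - b"
proof -
  have "(UNIV - Bad) \<inter> set_pmf M \<subseteq> Good" using assms(1) by blast
  then have "measure_pmf.prob M ((UNIV - Bad) \<inter> set_pmf M) \<le> measure_pmf.prob M Good"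
    by (rule measure_pmf.finite_measure_mono) simp
  then have "measure_pmf.prob M (UNIV - Bad) \<le> measure_pmf.prob M Good"
    by (simp only: measure_Int_set_pmf)
  then show ?thesis using measure_pmf.prob_compl[of Bad M] assms(2) by simp
qed

lemma finite_all_pairs: "finite (all_pairs n)"
proof -
  have "all_pairs n \<subseteq> Pow {0..<n}" unfolding all_pairs_def by auto
  then show ?thesis by (rule finite_subset) simp
qed

lemma Gnp_subset_all_pairs: "G \<in> set_pmf (Gnp n p) \<Longrightarrow> G \<subseteq> all_pairs n"
  unfolding Gnp_def by auto

lemma prob_Gnp_avoids:
  assumes D: "D \<subseteq> all_pairs n" and p: "0 \<le> p" "p \<le> 1"
  shows "measure_pmf.prob (Gnp n p) {G. G \<inter> D = {}} = (1 - p) ^ card D"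
proof -
  define Bs where "Bs e = (if e \<in> D then {False} else UNIV)" for e :: "nat set"
  have pre: "(\<lambda>f. {e\<in>all_pairs n. f e}) -` {G. G \<inter> D = {}} = Pi (all_pairs n) Bs"
    using D unfolding Bs_def Pi_def by auto
  have "measure_pmf.prob (Gnp n p) {G. G \<inter> D = {}} =
      measure_pmf.prob (Pi_pmf (all_pairs n) False (\<lambda>_. bernoulli_pmf p)) (Pi (all_pairs n) Bs)"
    unfolding Gnp_def measure_map_pmf pre ..
  also have "\<dots> = (\<Prod>e\<in>all_pairs n. measure_pmf.prob (bernoulli_pmf p) (Bs e))"
    by (rule measure_Pi_pmf_Pi[OF finite_all_pairs])
  also have "\<dots> = (\<Prod>e\<in>all_pairs n. if e \<in> D then 1 - p else 1)"
    using p unfolding Bs_def by (intro prod.cong) (auto simp: measure_pmf_single)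
  also have "\<dots> = (\<Prod>e\<in>all_pairs n \<inter> {e. e \<in> D}. 1 - p) * (\<Prod>e\<in>all_pairs n \<inter> - {e. e \<in> D}. 1)"
    by (rule prod.If_cases[OF finite_all_pairs])
  also have "all_pairs n \<inter> {e. e \<in> D} = D" using D by auto
  finally show ?thesis by simp
qed

lemma prob_Gnp_avoids_le:
  assumes D: "D \<subseteq> all_pairs n" and p: "0 \<le> p" "p \<le> 1"
  shows "measure_pmf.prob (Gnp n p) {G. G \<inter> D = {}} \<le> exp (- p * real (card D))"
proof -
  have "(1 - p) ^ card D \<le> exp (- p) ^ card D"
    using p by (intro power_mono) (auto simp: exp_ge_add_one_self[of "-p", simplified])
  also have "\<dots> = exp (- p * real (card D))" by (simp add: exp_of_nat_mult[symmetric] mult.commute)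
  finally show ?thesis using prob_Gnp_avoids[OF assms] by simp
qed

definition crossing_pairs :: "'a set \<Rightarrow> 'a set \<Rightarrow> 'a set set" where
  "crossing_pairs A B = (\<lambda>(a, b). {a, b}) ` (A \<times> B)"

lemma card_crossing_pairs:
  assumes "A \<inter> B = {}" "finite A" "finite B"
  shows "card (crossing_pairs A B) = card A * card B"
proof -
  have "inj_on (\<lambda>(a, b). {a, b}) (A \<times> B)"
    using assms(1) by (auto simp: inj_on_def doubleton_eq_iff)
  then show ?thesis unfolding crossing_pairs_def by (simp add: card_image card_cartesian_product)
qed

definition balanced_splits :: "nat \<Rightarrow> 'a set set \<Rightarrow> ('a set set \<times> 'a set set) set" where
  "balanced_splits n PP = {(J1, J2). J1 \<subseteq> PP \<and> J2 \<subseteq> PP \<and> J1 \<inter> J2 = {} \<and>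
     real n / 5 \<le> real (card (\<Union>J1)) \<and> real n / 5 \<le> real (card (\<Union>J2))}"

lemma small_treewidth_uncrossed_split:
  assumes ug: "ugraph {0..<n} H" and n: "n \<ge> 1" and G: "G \<subseteq> all_pairs n"
    and PP: "connected_partition H {0..<n} M L PP"
    and small: "real ((treewidth {0..<n} (H \<union> G) + 1) * M) \<le> real n / 10"
  shows "\<exists>(J1, J2)\<in>balanced_splits n PP. G \<inter> crossing_pairs (\<Union>J1) (\<Union>J2) = {}"
proof -
  let ?V = "{0..<n}"
  have "\<forall>e\<in>H \<union> G. e \<subseteq> ?V"
    using ug G unfolding ugraph_def all_pairs_def by auto
  then obtain I F B where td: "tree_decomp ?V (H \<union> G) I F B"
    and bags: "\<forall>i\<in>I. card (B i) \<le> treewidth ?V (H \<union> G) + 1"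
    using treewidth_attained[of ?V "H \<union> G"] n by auto
  obtain J1 J2 where J: "J1 \<subseteq> PP" "J2 \<subseteq> PP" "J1 \<inter> J2 = {}"
    and nadj: "\<forall>a\<in>\<Union>J1. \<forall>b\<in>\<Union>J2. \<not> adj (H \<union> G) a b"
    and s: "real n \<le> 4 * real (card (\<Union>J1)) + 2 * real ((treewidth ?V (H \<union> G) + 1) * M)"
      "real n \<le> 4 * real (card (\<Union>J2)) + 2 * real ((treewidth ?V (H \<union> G) + 1) * M)"
    using tree_decomp_separates_partition[OF td bags PP _ finite_atLeastLessThan] by auto
  have "(J1, J2) \<in> balanced_splits n PP" unfolding balanced_splits_def using J s small by auto
  moreover have "G \<inter> crossing_pairs (\<Union>J1) (\<Union>J2) = {}"
    using nadj unfolding crossing_pairs_def by auto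
  ultimately show ?thesis by blast
qed

lemma four_pow_mult_exp_le:
  fixes m :: real
  assumes "real N \<le> m / 100 + 1" "0 \<le> m"
  shows "4 ^ N * exp (- m / 25) \<le> 4 * exp (- m / 100)"
proof -
  have l4: "0 \<le> ln (4::real)" "ln (4::real) \<le> 3" using ln_le_minus_one[of 4] by auto
  have "(4::real) ^ N = exp (real N * ln 4)" by (simp add: exp_of_nat_mult)
  then have "4 ^ N * exp (- m / 25) = exp (real N * ln 4 + (- m / 25))"
    by (simp only: exp_add)
  also have "\<dots> \<le> exp (ln 4 + (- m / 100))"
  proof -
    have "real N * ln 4 \<le> (m / 100 + 1) * ln 4" using assms(1) l4 by (intro mult_right_mono) auto
    moreover have "m * ln 4 \<le> m * 3" using l4 assms(2) by (intro mult_left_mono) auto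
    ultimately show ?thesis by (simp add: algebra_simps)
  qed
  also have "\<dots> = exp (ln 4) * exp (- m / 100)" by (simp only: exp_add)
  also have "\<dots> = 4 * exp (- m / 100)" by simp
  finally show ?thesis .
qed

lemma card_balanced_splits_le:
  assumes "finite PP"
  shows "card (balanced_splits n PP) \<le> 4 ^ card PP"
proof -
  have sub: "balanced_splits n PP \<subseteq> Pow PP \<times> Pow PP" unfolding balanced_splits_def by auto
  have "card (balanced_splits n PP) \<le> card (Pow PP \<times> Pow PP)"
    using sub assms by (intro card_mono) auto
  also have "\<dots> = 4 ^ card PP"
    using assms by (simp add: card_cartesian_product card_Pow power_mult_distrib[symmetric])
  finally show ?thesis .
qed

lemma prob_Gnp_avoids_split_le:
  assumes PP: "connected_partition H {0..<n} M L PP" and p: "0 \<le> p" "p \<le> 1"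
    and J: "(J1, J2) \<in> balanced_splits n PP"
  shows "measure_pmf.prob (Gnp n p) {G. G \<inter> crossing_pairs (\<Union>J1) (\<Union>J2) = {}}
           \<le> exp (- (real n ^ 2 * p) / 25)"
proof -
  have J12: "J1 \<subseteq> PP" "J2 \<subseteq> PP" "J1 \<inter> J2 = {}" "real n / 5 \<le> real (card (\<Union>J1))"
    "real n / 5 \<le> real (card (\<Union>J2))" using J unfolding balanced_splits_def by auto
  have PPd: "\<forall>P\<in>PP. \<forall>Q\<in>PP. P \<noteq> Q \<longrightarrow> P \<inter> Q = {}" and PPu: "\<Union>PP = {0..<n}"
    using PP unfolding connected_partition_def by auto
  have disj: "\<Union>J1 \<inter> \<Union>J2 = {}"
  proof (rule ccontr)
    assume "\<Union>J1 \<inter> \<Union>J2 \<noteq> {}"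
    then obtain x P Q where PQ: "P \<in> J1" "Q \<in> J2" "x \<in> P" "x \<in> Q" by blast
    then have "P \<noteq> Q" "P \<in> PP" "Q \<in> PP" using J12(1-3) by blast+
    then show False using PPd PQ(3,4) by blast
  qed
  have sub12: "\<Union>J1 \<subseteq> {0..<n}" "\<Union>J2 \<subseteq> {0..<n}" using J12(1,2) PPu by auto
  have fin12: "finite (\<Union>J1)" "finite (\<Union>J2)" using sub12 by (auto intro: finite_subset)
  have D: "crossing_pairs (\<Union>J1) (\<Union>J2) \<subseteq> all_pairs n"
  proof
    fix e assume "e \<in> crossing_pairs (\<Union>J1) (\<Union>J2)"
    then obtain a b where ab: "e = {a, b}" "a \<in> \<Union>J1" "b \<in> \<Union>J2" unfolding crossing_pairs_def by auto
    then have "a \<noteq> b" "a < n" "b < n" using disj sub12 by auto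
    then show "e \<in> all_pairs n" unfolding all_pairs_def using ab(1) by blast
  qed
  have "(real n / 5) * (real n / 5) \<le> real (card (\<Union>J1)) * real (card (\<Union>J2))"
    using J12(4,5) by (intro mult_mono) auto
  then have "p * ((real n / 5) * (real n / 5)) \<le> p * (real (card (\<Union>J1)) * real (card (\<Union>J2)))"
    using p by (intro mult_left_mono) auto
  then have "real n ^ 2 * p / 25 \<le> p * (real (card (\<Union>J1)) * real (card (\<Union>J2)))"
    by (simp add: power2_eq_square algebra_simps)
  also have "\<dots> = p * real (card (crossing_pairs (\<Union>J1) (\<Union>J2)))"
    using card_crossing_pairs[OF disj fin12] by simp
  finally have "real n ^ 2 * p / 25 \<le> p * real (card (crossing_pairs (\<Union>J1) (\<Union>J2)))" .
  then have "exp (- p * real (card (crossing_pairs (\<Union>J1) (\<Union>J2)))) \<le> exp (- (real n ^ 2 * p) / 25)"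
    by simp
  with prob_Gnp_avoids_le[OF D p] show ?thesis by linarith
qed

lemma prob_Gnp_uncrossed_split_le:
  assumes PP: "connected_partition H {0..<n} M L PP" and p: "0 \<le> p" "p \<le> 1"
    and cPP: "real (card PP) \<le> real n ^ 2 * p / 100 + 1"
  shows "measure_pmf.prob (Gnp n p)
           {G. \<exists>(J1, J2)\<in>balanced_splits n PP. G \<inter> crossing_pairs (\<Union>J1) (\<Union>J2) = {}}
         \<le> 4 * exp (- (real n ^ 2 * p) / 100)"
proof -
  let ?m = "real n ^ 2 * p"
  define Ev where "Ev c = {G. G \<inter> crossing_pairs (\<Union>(fst c)) (\<Union>(snd c)) = {}}"
    for c :: "nat set set \<times> nat set set"
  have finPP: "finite PP"
    using PP finite_UnionD[of PP] unfolding connected_partition_def by auto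
  have finCh: "finite (balanced_splits n PP)"
    by (rule finite_subset[of _ "Pow PP \<times> Pow PP"]) (use finPP in \<open>auto simp: balanced_splits_def\<close>)
  have "{G. \<exists>(J1, J2)\<in>balanced_splits n PP. G \<inter> crossing_pairs (\<Union>J1) (\<Union>J2) = {}}
      = \<Union>(Ev ` balanced_splits n PP)" unfolding Ev_def by force
  then have "measure_pmf.prob (Gnp n p)
        {G. \<exists>(J1, J2)\<in>balanced_splits n PP. G \<inter> crossing_pairs (\<Union>J1) (\<Union>J2) = {}}
      \<le> (\<Sum>c\<in>balanced_splits n PP. measure_pmf.prob (Gnp n p) (Ev c))"
    using measure_pmf.finite_measure_subadditive_finite[OF finCh] by simp
  also have "\<dots> \<le> real (card (balanced_splits n PP)) * exp (- ?m / 25)"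
    using sum_bounded_above[of "balanced_splits n PP" "\<lambda>c. measure_pmf.prob (Gnp n p) (Ev c)"]
      prob_Gnp_avoids_split_le[OF PP p] unfolding Ev_def by fastforce
  also have "\<dots> \<le> 4 ^ card PP * exp (- ?m / 25)"
    using card_balanced_splits_le[OF finPP, of n] by (simp flip: of_nat_le_iff)
  also have "\<dots> \<le> 4 * exp (- ?m / 100)" using cPP p by (intro four_pow_mult_exp_le) auto
  finally show ?thesis .
qed

lemma card_connected_partition_le:
  assumes PP: "connected_partition H V M L PP" and finV: "finite V" and L: "L \<ge> 1"
  shows "real (card PP) \<le> real (card V) / real L + 1"
proof -
  have PPu: "\<Union>PP = V" and small: "card {P\<in>PP. card P < L} \<le> 1"
    using PP unfolding connected_partition_def by auto
  have finPP: "finite PP" using finV PPu by (simp add: finite_UnionD)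
  define Big where "Big = {P\<in>PP. \<not> card P < L}"
  have "PP = {P\<in>PP. card P < L} \<union> Big" "{P\<in>PP. card P < L} \<inter> Big = {}" unfolding Big_def by auto
  then have "card PP = card {P\<in>PP. card P < L} + card Big"
    using finPP card_Un_disjoint[of "{P\<in>PP. card P < L}" Big] by (metis finite_Un)
  then have c1: "real (card PP) \<le> 1 + real (card Big)" using small by simp
  have "real L * real (card Big) = (\<Sum>P\<in>Big. real L)" by simp
  also have "\<dots> \<le> (\<Sum>P\<in>Big. real (card P))" unfolding Big_def by (intro sum_mono) auto
  also have "\<dots> \<le> (\<Sum>P\<in>PP. real (card P))" using finPP unfolding Big_def by (intro sum_mono2) auto
  also have "\<dots> = real (card V)" using card_Union_parts[OF PP finV order_refl] PPu by simp
  finally have "real (card Big) \<le> real (card V) / real L" using L by (simp add: field_simps)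
  then show ?thesis using c1 by simp
qed

lemma exists_connected_partition_few_parts:
  fixes m :: real
  assumes ug: "ugraph V H" and con: "connected_graph V H"
    and deg: "\<forall>v\<in>V. degree H v \<le> Delta" and Delta: "Delta \<ge> 1" and m: "0 < m"
  shows "\<exists>L PP. connected_partition H V (Delta * L) L PP \<and>
           real (card PP) \<le> m / 100 + 1 \<and> real L \<le> 100 * real (card V) / m + 1"
proof -
  have finV: "finite V" and "V \<noteq> {}" using ug con unfolding ugraph_def connected_graph_def by auto
  then have pos: "0 < 100 * real (card V) / m" using m by (simp add: card_gt_0_iff)
  define L where "L = nat \<lceil>100 * real (card V) / m\<rceil>"
  have Lge: "real L \<ge> 100 * real (card V) / m" and Lle: "real L \<le> 100 * real (card V) / m + 1"
    unfolding L_def using pos by (linarith, simp add: of_nat_nat)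
  then have L1: "L \<ge> 1" using pos by linarith
  obtain PP where PP: "connected_partition H V (Delta * L) L PP"
    using exists_connected_partition[OF ug con deg L1 Delta] by blast
  have "real (card PP) \<le> real (card V) / real L + 1"
    using card_connected_partition_le[OF PP finV L1] .
  moreover have "real (card V) / real L \<le> m / 100"
    using Lge m L1 by (simp add: field_simps)
  ultimately have "real (card PP) \<le> m / 100 + 1" by linarith
  then show ?thesis using PP Lle by blast
qed

text \<open>The parameters of the main argument: m = n^2 p, q = m / Delta, L about 100 n / m.\<close>
lemma small_treewidth_arith:
  fixes k t m Delta L n :: real
  assumes "k < (t + m / Delta) / 8000" "t \<le> k" "57600 \<le> m / Delta" "0 < Delta"
    "0 < m" "m \<le> 2 * n" "0 \<le> L" "L \<le> 100 * n / m + 1"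
  shows "(k + 1) * Delta * L \<le> n / 10"
proof -
  define q where "q = m / Delta"
  have "8000 * k < t + q" using assms(1) unfolding q_def by simp
  then have "k + 1 \<le> q / 2000" using assms(2,3) unfolding q_def[symmetric] by linarith
  then have "(k + 1) * Delta \<le> q / 2000 * Delta" by (rule mult_right_mono) (use assms(4) in simp)
  then have "(k + 1) * Delta \<le> m / 2000" using assms(4) unfolding q_def by simp
  then have "(k + 1) * Delta * L \<le> (m / 2000) * L" using assms(7) by (rule mult_right_mono)
  also have "\<dots> \<le> (m / 2000) * (100 * n / m + 1)" using assms(5,8) by (intro mult_left_mono) auto
  also have "\<dots> = n / 20 + m / 2000" using assms(5) by (simp add: field_simps)
  also have "\<dots> \<le> n / 10" using assms(5,6) by linarith
  finally show ?thesis .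
qed

lemma prob_treewidth_lower_bound:
  fixes H :: "nat set set" and n Delta :: nat and p :: real
  assumes p: "0 < p" "p \<le> 2 / real n" and ug: "ugraph {0..<n} H" and con: "connected_graph {0..<n} H"
    and Delta: "Delta = max_degree {0..<n} H" "1 \<le> Delta" "real Delta \<le> real n ^ 2 * p / 57600"
  shows "measure_pmf.prob (Gnp n p) {G. real (treewidth {0..<n} (H \<union> G)) \<ge>
            1/8000 * (real (treewidth {0..<n} H) + real n ^ 2 * p / real Delta)}
         \<ge> 1 - 4 * exp (- (real n ^ 2 * p) / 100)"
proof -
  define V where "V = {0..<n}"
  define m where "m = real n ^ 2 * p"
  define Good where "Good = {G. real (treewidth V (H \<union> G)) \<ge>
            1/8000 * (real (treewidth V H) + m / real Delta)}"
  have n1: "n \<ge> 1" using con unfolding connected_graph_def by auto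
  have m0: "0 < m" unfolding m_def using p n1 by simp
  have m2n: "m \<le> 2 * real n"
  proof -
    have "real n * p \<le> 2" using p n1 by (simp add: field_simps)
    then have "real n * (real n * p) \<le> real n * 2" by (intro mult_left_mono) auto
    then show ?thesis unfolding m_def by (simp add: power2_eq_square mult.assoc)
  qed
  have q: "57600 \<le> m / real Delta" using Delta(2,3) unfolding m_def by (simp add: field_simps)
  have p1: "p \<le> 1"
  proof -
    have "57600 * real Delta \<le> m" using q Delta(2) by (simp add: field_simps)
    then have "real n \<ge> 28800" using m2n Delta(2) by linarith
    then have "2 / real n \<le> 1" by simp
    then show ?thesis using p(2) by linarith
  qed
  have deg: "\<forall>v\<in>V. degree H v \<le> Delta"
    unfolding Delta(1) max_degree_def V_def by (auto intro: Max_ge)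
  obtain L PP where PP: "connected_partition H V (Delta * L) L PP"
    and cPP: "real (card PP) \<le> m / 100 + 1" and Lle: "real L \<le> 100 * real n / m + 1"
    using exists_connected_partition_few_parts[OF ug[folded V_def] con[folded V_def] deg Delta(2) m0]
    unfolding V_def by auto
  define Bad where "Bad = {G. \<exists>(J1, J2)\<in>balanced_splits n PP. G \<inter> crossing_pairs (\<Union>J1) (\<Union>J2) = {}}"
  have "G \<in> Good" if G: "G \<in> set_pmf (Gnp n p)" "G \<notin> Bad" for G
  proof (rule ccontr)
    assume "G \<notin> Good"
    then have lt: "real (treewidth V (H \<union> G)) < (real (treewidth V H) + m / real Delta) / 8000"
      unfolding Good_def by simp
    have "treewidth V H \<le> treewidth V (H \<union> G)"
      using ug Gnp_subset_all_pairs[OF G(1)] n1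
      by (intro treewidth_mono) (auto simp: V_def ugraph_def all_pairs_def)
    then have "(real (treewidth V (H \<union> G)) + 1) * real Delta * real L \<le> real n / 10"
      by (intro small_treewidth_arith[OF lt _ q _ m0 m2n _ Lle]) (use Delta(2) in auto)
    then have "\<exists>(J1, J2)\<in>balanced_splits n PP. G \<inter> crossing_pairs (\<Union>J1) (\<Union>J2) = {}"
      using small_treewidth_uncrossed_split[OF ug n1 Gnp_subset_all_pairs[OF G(1)] PP[unfolded V_def]]
      unfolding V_def by (simp add: algebra_simps)
    then show False using G(2) unfolding Bad_def by blast
  qed
  moreover have "measure_pmf.prob (Gnp n p) Bad \<le> 4 * exp (- m / 100)"
    using prob_Gnp_uncrossed_split_le[OF PP[unfolded V_def] _ p1 cPP[unfolded m_def]] p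
    unfolding Bad_def m_def by simp
  ultimately show ?thesis
    using prob_ge_one_minus_of_support[of "Gnp n p" Bad Good] unfolding Good_def V_def m_def by simp
qed

lemma tendsto_one_minus_exp_neg:
  fixes m :: "nat \<Rightarrow> real"
  assumes "filterlim m at_top sequentially"
  shows "(\<lambda>n. 1 - 4 * exp (- m n / 100)) \<longlonglongrightarrow> 1"
proof -
  have "filterlim (\<lambda>n. m n / 100) at_top sequentially"
    using filterlim_tendsto_pos_mult_at_top[OF tendsto_const[of "1/100::real"] _ assms] by simp
  then have "filterlim (\<lambda>n. - m n / 100) at_bot sequentially"
    by (simp add: filterlim_uminus_at_bot)
  then have "(\<lambda>n. exp (- m n / 100)) \<longlonglongrightarrow> 0"
    by (rule filterlim_compose[OF exp_at_bot])
  then have "(\<lambda>n. 1 - 4 * exp (- m n / 100)) \<longlonglongrightarrow> 1 - 4 * 0"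
    by (intro tendsto_intros)
  then show ?thesis by simp
qed

theorem mainTheorem5:
  "\<exists>c>0. \<forall>(p :: nat \<Rightarrow> real) (H :: nat \<Rightarrow> nat set set).
     (\<forall>\<^sub>F n in sequentially.
        0 < p n \<and> p n \<le> 2 / real n \<and>
        ugraph {0..<n} (H n) \<and> connected_graph {0..<n} (H n) \<and>
        1 \<le> max_degree {0..<n} (H n) \<and>
        real (max_degree {0..<n} (H n)) \<le> real n ^ 2 * p n / 57600) \<longrightarrow>
     filterlim (\<lambda>n. real n ^ 2 * p n) at_top sequentially \<longrightarrow>
     ((\<lambda>n. measure_pmf.prob (Gnp n (p n))
        {G. real (treewidth {0..<n} (H n \<union> G)) \<ge>
            c * (real (treewidth {0..<n} (H n)) + real n ^ 2 * p n / real (max_degree {0..<n} (H n)))})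
      \<longlonglongrightarrow> 1)"
proof (intro exI[of _ "1/8000"] conjI allI impI)
  fix p :: "nat \<Rightarrow> real" and H :: "nat \<Rightarrow> nat set set"
  assume hyps: "\<forall>\<^sub>F n in sequentially.
        0 < p n \<and> p n \<le> 2 / real n \<and>
        ugraph {0..<n} (H n) \<and> connected_graph {0..<n} (H n) \<and>
        1 \<le> max_degree {0..<n} (H n) \<and>
        real (max_degree {0..<n} (H n)) \<le> real n ^ 2 * p n / 57600"
    and lim: "filterlim (\<lambda>n. real n ^ 2 * p n) at_top sequentially"
  let ?prob = "\<lambda>n. measure_pmf.prob (Gnp n (p n))
        {G. real (treewidth {0..<n} (H n \<union> G)) \<ge>
            1/8000 * (real (treewidth {0..<n} (H n)) + real n ^ 2 * p n / real (max_degree {0..<n} (H n)))}"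
  have lower: "\<forall>\<^sub>F n in sequentially. 1 - 4 * exp (- (real n ^ 2 * p n) / 100) \<le> ?prob n"
    using hyps by eventually_elim (use prob_treewidth_lower_bound in blast)
  have upper: "\<forall>\<^sub>F n in sequentially. ?prob n \<le> 1"
    by (simp add: measure_pmf.prob_le_1)
  show "?prob \<longlonglongrightarrow> 1"
    by (rule tendsto_sandwich[OF lower upper tendsto_one_minus_exp_neg[OF lim] tendsto_const])
qed simp

end
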